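(* Let $m$ be a non-negative integer and let $S=(u_0,\dots,u_{n-1})$ be a finite sequence of elements of $\mathbb{Z}/m\mathbb{Z}$. Then $S$ is antisymmetric if and only if its derived sequence $\partial S$ is antisymmetric and $2\sigma(S)=\sigma(\partial S)=0$.
   Context: $\mathbb{Z}/0\mathbb{Z}=\mathbb{Z}$. A finite sequence $(v_0,\dots,v_{\ell-1})$ is antisymmetric if $v_{\ell-1-j}=-v_j$ for all $j$ (the empty sequence is antisymmetric). For $n\ge2$, $\partial S=(-u_j-u_{j+1})_{j=0}^{n-2}$; for $n\le1$, $\partial S$ is the empty sequence. $\sigma(v_0,\dots,v_{\ell-1})=\sum_{j=0}^{\ell-1}v_j$ (zero for the empty sequence). *)

theory Defs
  imports "HOL-Number_Theory.Cong"
begin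

text \<open>Elements of Z/mZ are represented by integers; equality in Z/mZ is
  congruence modulo m (for m = 0 this is equality in Z).\<close>

definition antisymmetric_mod :: "nat \<Rightarrow> int list \<Rightarrow> bool" where
  "antisymmetric_mod m v \<longleftrightarrow>
     (\<forall>j < length v. [v ! (length v - 1 - j) = - (v ! j)] (mod int m))"

definition derived :: "int list \<Rightarrow> int list" where
  "derived u = (if length u \<ge> 2
                 then map (\<lambda>j. - (u ! j) - u ! (j + 1)) [0..<length u - 1]
                 else [])"

definition sigma :: "int list \<Rightarrow> int" where
  "sigma v = sum_list v"

end

theory Submission
  imports Defs
begin

text \<open>Write \<open>w j = u_j + u_(n-1-j)\<close>. Then \<open>S\<close> is antisymmetric iff all \<open>w j\<close> vanish, the
  corresponding sums for \<open>\<partial>S\<close> are \<open>-(w j + w (j+1))\<close>, \<open>2\<sigma>(S) = \<Sum> w j\<close> and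
  \<open>\<sigma>(\<partial>S) = w 0 - 2\<sigma>(S)\<close>. So \<open>\<partial>S\<close> is antisymmetric iff consecutive \<open>w\<close>'s sum to zero,
  and then all \<open>w j\<close> vanish as soon as \<open>w 0\<close> does, which the two sum conditions
  guarantee.\<close>

definition mirror_sum :: "int list \<Rightarrow> nat \<Rightarrow> int" where
  "mirror_sum v j = v ! j + v ! (length v - 1 - j)"

lemma antisymmetric_mod_iff_dvd_mirror_sum:
  "antisymmetric_mod m v \<longleftrightarrow> (\<forall>j < length v. int m dvd mirror_sum v j)"
  unfolding antisymmetric_mod_def mirror_sum_def cong_iff_dvd_diff by (simp add: add.commute)

lemma length_derived [simp]: "length (derived u) = length u - 1"
  unfolding derived_def by auto

lemma nth_derived: "j < length u - 1 \<Longrightarrow> derived u ! j = - (u ! j) - u ! Suc j"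
  unfolding derived_def by auto

lemma mirror_sum_derived:
  assumes "j < length u - 1"
  shows "mirror_sum (derived u) j = - (mirror_sum u j + mirror_sum u (Suc j))"
proof -
  have "length u - 1 - 1 - j < length u - 1" "Suc (length u - 1 - 1 - j) = length u - 1 - j"
    using assms by auto
  with assms show ?thesis
    by (simp add: mirror_sum_def nth_derived)
qed

lemma sum_mirror_sum: "(\<Sum>j<length v. mirror_sum v j) = 2 * sigma v"
proof -
  have "(\<Sum>j<length v. v ! (length v - 1 - j)) = (\<Sum>j<length v. rev v ! j)"
    by (rule sum.cong) (auto simp: rev_nth)
  also have "\<dots> = sigma v"
    by (metis atLeast0LessThan length_rev sigma_def sum_list_rev sum_list_sum_nth)
  finally show ?thesis
    by (simp add: mirror_sum_def sum.distrib sigma_def sum_list_sum_nth atLeast0LessThan)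
qed

lemma sigma_derived:
  assumes "u \<noteq> []"
  shows "sigma (derived u) = mirror_sum u 0 - 2 * sigma u"
proof -
  define n where "n = length u - 1"
  have len: "length u = Suc n"
    using assms by (simp add: n_def)
  have sigma_u: "sigma u = (\<Sum>j<Suc n. u ! j)"
    by (simp add: sigma_def sum_list_sum_nth atLeast0LessThan len)
  then have "sigma u = (\<Sum>j<n. u ! j) + u ! n"
    by simp
  moreover have "sigma u = u ! 0 + (\<Sum>j<n. u ! Suc j)"
    using sigma_u by (simp only: sum.lessThan_Suc_shift)
  moreover have "sigma (derived u) = - (\<Sum>j<n. u ! j) - (\<Sum>j<n. u ! Suc j)"
    by (simp add: sigma_def sum_list_sum_nth atLeast0LessThan nth_derived len
        sum_subtractf sum_negf)
  ultimately show ?thesis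
    by (simp add: mirror_sum_def len)
qed

lemma all_dvd_iff_dvd_first_and_consecutive_sums:
  fixes f :: "nat \<Rightarrow> 'a::comm_ring_1"
  shows "(\<forall>j<n. d dvd f j) \<longleftrightarrow>
           (\<forall>j. Suc j < n \<longrightarrow> d dvd f j + f (Suc j)) \<and> (n = 0 \<or> d dvd f 0)"
proof (intro iffI conjI)
  assume "(\<forall>j. Suc j < n \<longrightarrow> d dvd f j + f (Suc j)) \<and> (n = 0 \<or> d dvd f 0)"
  then have step: "\<And>j. Suc j < n \<Longrightarrow> d dvd f j + f (Suc j)" and first: "n = 0 \<or> d dvd f 0"
    by auto
  show "\<forall>j<n. d dvd f j"
  proof (intro allI impI)
    fix j assume "j < n"
    then show "d dvd f j"
    proof (induction j)
      case 0
      then show ?case using first by simp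
    next
      case (Suc j)
      then have "d dvd f j" "d dvd f j + f (Suc j)"
        using step by auto
      then show ?case
        by (metis add_diff_cancel_left' dvd_diff)
    qed
  qed
qed (auto intro: dvd_add)

lemma antisymmetric_mod_iff_derived:
  "antisymmetric_mod m u \<longleftrightarrow>
     antisymmetric_mod m (derived u) \<and> (u = [] \<or> int m dvd mirror_sum u 0)"
proof -
  have "int m dvd mirror_sum (derived u) j \<longleftrightarrow>
          int m dvd mirror_sum u j + mirror_sum u (Suc j)" if "j < length u - 1" for j
    using mirror_sum_derived[OF that] by (metis dvd_minus_iff)
  then have "antisymmetric_mod m (derived u) \<longleftrightarrow>
          (\<forall>j. Suc j < length u \<longrightarrow> int m dvd mirror_sum u j + mirror_sum u (Suc j))"
    by (auto simp: antisymmetric_mod_iff_dvd_mirror_sum)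
  then show ?thesis
    by (simp add: antisymmetric_mod_iff_dvd_mirror_sum
        all_dvd_iff_dvd_first_and_consecutive_sums[where f = "mirror_sum u"])
qed

lemma antisymmetric_mod_imp_dvd_two_sigma:
  "antisymmetric_mod m u \<Longrightarrow> int m dvd 2 * sigma u"
  by (simp add: antisymmetric_mod_iff_dvd_mirror_sum flip: sum_mirror_sum) (rule dvd_sum, simp)

theorem proposition11:
  fixes m :: nat and S :: "int list"
  shows "antisymmetric_mod m S \<longleftrightarrow>
           (antisymmetric_mod m (derived S)
            \<and> [2 * sigma S = 0] (mod int m)
            \<and> [sigma (derived S) = 0] (mod int m))"
proof (cases "S = []")
  case True
  then show ?thesis
    by (simp add: antisymmetric_mod_def derived_def sigma_def)
next
  case False
  then have "sigma (derived S) = mirror_sum S 0 - 2 * sigma S"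
    by (rule sigma_derived)
  then have "int m dvd 2 * sigma S \<Longrightarrow>
               int m dvd mirror_sum S 0 \<longleftrightarrow> int m dvd sigma (derived S)"
    by (metis diff_add_cancel dvd_add_left_iff dvd_diff)
  then show ?thesis
    using False antisymmetric_mod_iff_derived[of m S] antisymmetric_mod_imp_dvd_two_sigma[of m S]
    by (auto simp: cong_0_iff)
qed

end
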